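(* Let $\alpha,\beta$ be parameters, $q=\alpha-\beta$, and let $\hat{\mathbf{R}}_{\alpha,\beta}:\mathbb{R}^3\times\mathbb{R}^3\to\mathbb{R}^3\times\mathbb{R}^3$, $(\mathbf{x},\mathbf{y})\mapsto(\mathbf{u},\mathbf{v})$, be the map $$\mathbf{u}=\hat k(\mathbf{x},\mathbf{y},q)\,\mathbf{x}+\big(1-\hat k(\mathbf{y},\mathbf{x},q)\big)\mathbf{y}+2q\,\hat{\mathbf{r}}(\mathbf{x},\mathbf{y},q),\quad \mathbf{v}=\big(1-\hat k(\mathbf{x},\mathbf{y},q)\big)\mathbf{x}+\hat k(\mathbf{y},\mathbf{x},q)\,\mathbf{y}-2q\,\hat{\mathbf{r}}(\mathbf{x},\mathbf{y},q),$$ where, with $\langle\mathbf{x},\mathbf{y}\rangle:=x_0y_0-x_1y_1-x_2y_2$, $$\hat k(\mathbf{x},\mathbf{y},q)=\frac{\langle\mathbf{x},\mathbf{x}\rangle-\langle\mathbf{y},\mathbf{y}\rangle+q^2}{\langle\mathbf{x}+\mathbf{y},\mathbf{x}+\mathbf{y}\rangle+q^2},\qquad \hat{\mathbf{r}}(\mathbf{x},\mathbf{y},q)=\frac{(x_1y_2-x_2y_1,\ x_0y_2-x_2y_0,\ x_1y_0-x_0y_1)}{\langle\mathbf{x}+\mathbf{y},\mathbf{x}+\mathbf{y}\rangle+q^2}.$$ For $n\ge1$ let $\mathbf{T}_n:\mathbb{R}^{6n}\to\mathbb{R}^{6n}$ be the transfer map $$\mathbf{T}_n(\mathbf{x}_1,\dots,\mathbf{x}_n,\mathbf{y}_1,\dots,\mathbf{y}_n)=(\mathbf{x}_1',\dots,\mathbf{x}_n',\mathbf{y}_2',\mathbf{y}_3',\dots,\mathbf{y}_n',\mathbf{y}_1'),\qquad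 (\mathbf{x}_i',\mathbf{y}_i')=\hat{\mathbf{R}}_{\alpha,\beta}(\mathbf{x}_i,\mathbf{y}_i),$$ and let its monodromy matrix be $$\mathbf{M}(\zeta)=\mathbf{M}_n(\mathbf{x}_1,\dots,\mathbf{x}_n,\mathbf{y}_1,\dots,\mathbf{y}_n)=\prod_{j=0}^{n-1}\mathbf{L}(\mathbf{y}_{n-j},\beta,\zeta)\,\mathbf{L}(\mathbf{x}_{n-j},\alpha,\zeta),\qquad \mathbf{L}(\mathbf{x},\alpha,\zeta)=\begin{pmatrix}\zeta+i(x_2-\alpha) & x_0+x_1\\ x_0-x_1 & \zeta-i(x_2+\alpha)\end{pmatrix}.$$ Equip $\mathbb{R}^{6n}$ with the (extended Sklyanin) Poisson bracket in which, for each of the $2n$ vectors $\mathbf{z}\in\{\mathbf{x}_1,\dots,\mathbf{x}_n,\mathbf{y}_1,\dots,\mathbf{y}_n\}$, $\{z_0,z_1\}=z_2$, $\{z_0,z_2\}=-z_1$, $\{z_1,z_2\}=-z_0$, and coordinates of different vectors Poisson commute. Then $\mathbf{T}_n$ is a Poisson map with respect to this bracket; it preserves the spectrum of the monodromy matrix $\mathbf{M}(\zeta)$, the $2n$ Casimir functions $\mathcal{C}(\mathbf{x}_i)$, $\mathcal{C}(\mathbf{y}_i)$ where $\mathcal{C}(\mathbf{z})=z_0^2-z_1^2-z_2^2$, and the three linear integrals $I_k=\sum_{i=1}^n\big((x_i)_k+(y_i)_k\big)$, $k=0,1,2$ (where $(x_i)_k$ is the $k$-th component of $\mathbf{x}_i$).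 Furthermore, $\{\operatorname{tr}\mathbf{M}(\zeta),\operatorname{tr}\mathbf{M}(\eta)\}=0$ for all $\zeta,\eta$.
   Context: Here $i=\sqrt{-1}$, $\zeta,\eta\in\mathbb{C}$ are spectral parameters, and all maps are understood generically (where denominators are nonzero). "Preserves the spectrum of $\mathbf{M}(\zeta)$" means that the eigenvalues of $\mathbf{M}(\zeta)$ computed at a point and at its image under $\mathbf{T}_n$ coincide for every $\zeta$. A Poisson map is one whose pullback preserves the Poisson bracket of functions. *)

theory Defs
  imports "HOL-Analysis.Analysis"
begin

text \<open>Points of R^{6n}: pairs (X, Y) of n-tuples of 3-vectors, indexed by a finite
  linearly ordered type 'n (so n = CARD('n) >= 1; the order gives the labels 1..n).\<close>

type_synonym 'n state = "(real^3^'n) \<times> (real^3^'n)"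

definition vec3 :: "real \<Rightarrow> real \<Rightarrow> real \<Rightarrow> real^3" where
  "vec3 a b c = (\<chi> k. if k = 0 then a else if k = 1 then b else c)"

definition mink :: "real^3 \<Rightarrow> real^3 \<Rightarrow> real" where
  "mink x y = x$0 * y$0 - x$1 * y$1 - x$2 * y$2"

definition khat :: "real^3 \<Rightarrow> real^3 \<Rightarrow> real \<Rightarrow> real" where
  "khat x y q = (mink x x - mink y y + q^2) / (mink (x + y) (x + y) + q^2)"

definition rhat :: "real^3 \<Rightarrow> real^3 \<Rightarrow> real \<Rightarrow> real^3" where
  "rhat x y q = (1 / (mink (x + y) (x + y) + q^2)) *\<^sub>R
     vec3 (x$1 * y$2 - x$2 * y$1) (x$0 * y$2 - x$2 * y$0) (x$1 * y$0 - x$0 * y$1)"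

definition Rhat :: "real \<Rightarrow> real \<Rightarrow> real^3 \<Rightarrow> real^3 \<Rightarrow> (real^3) \<times> (real^3)" where
  "Rhat \<alpha> \<beta> x y = (let q = \<alpha> - \<beta> in
     (khat x y q *\<^sub>R x + (1 - khat y x q) *\<^sub>R y + (2 * q) *\<^sub>R rhat x y q,
      (1 - khat x y q) *\<^sub>R x + khat y x q *\<^sub>R y - (2 * q) *\<^sub>R rhat x y q))"

definition csucc :: "'n::{finite,linorder} \<Rightarrow> 'n" where
  "csucc i = (if i = Max UNIV then Min UNIV else Min {j. i < j})"

definition Tmap :: "real \<Rightarrow> real \<Rightarrow> 'n::{finite,linorder} state \<Rightarrow> 'n state" where
  "Tmap \<alpha> \<beta> p = ((\<chi> i. fst (Rhat \<alpha> \<beta> (fst p $ i) (snd p $ i))),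
                   (\<chi> i. snd (Rhat \<alpha> \<beta> (fst p $ csucc i) (snd p $ csucc i))))"

text \<open>Generic points: all denominators of Rhat nonzero.\<close>
definition generic :: "real \<Rightarrow> real \<Rightarrow> 'n::finite state set" where
  "generic \<alpha> \<beta> = {p. \<forall>i. mink (fst p $ i + snd p $ i) (fst p $ i + snd p $ i) + (\<alpha> - \<beta>)^2 \<noteq> 0}"

definition Lmat :: "real^3 \<Rightarrow> real \<Rightarrow> complex \<Rightarrow> complex^2^2" where
  "Lmat x a \<zeta> = (\<chi> r c.
     if r = 0 \<and> c = 0 then \<zeta> + \<i> * (complex_of_real (x$2) - complex_of_real a)
     else if r = 0 \<and> c = 1 then complex_of_real (x$0 + x$1)
     else if r = 1 \<and> c = 0 then complex_of_real (x$0 - x$1)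
     else \<zeta> - \<i> * (complex_of_real (x$2) + complex_of_real a))"

text \<open>Monodromy matrix L(y_n)L(x_n) L(y_{n-1})L(x_{n-1}) ... L(y_1)L(x_1).\<close>
definition monodromy :: "real \<Rightarrow> real \<Rightarrow> complex \<Rightarrow> 'n::{finite,linorder} state \<Rightarrow> complex^2^2" where
  "monodromy \<alpha> \<beta> \<zeta> p =
     fold (\<lambda>i A. Lmat (snd p $ i) \<beta> \<zeta> ** Lmat (fst p $ i) \<alpha> \<zeta> ** A)
          (sorted_list_of_set (UNIV :: 'n set)) (mat 1)"

definition eigenvalues :: "complex^2^2 \<Rightarrow> complex set" where
  "eigenvalues A = {c. \<exists>v. v \<noteq> 0 \<and> A *v v = c *s v}"

definition casimir :: "real^3 \<Rightarrow> real" where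
  "casimir z = z$0^2 - z$1^2 - z$2^2"

definition lin_integral :: "3 \<Rightarrow> 'n::finite state \<Rightarrow> real" where
  "lin_integral k p = (\<Sum>i\<in>UNIV. (fst p $ i)$k + (snd p $ i)$k)"

definition Jst :: "real^3 \<Rightarrow> 3 \<Rightarrow> 3 \<Rightarrow> real" where
  "Jst z a b =
     (if a = 0 \<and> b = 1 then z$2 else if a = 1 \<and> b = 0 then - z$2
      else if a = 0 \<and> b = 2 then - z$1 else if a = 2 \<and> b = 0 then z$1
      else if a = 1 \<and> b = 2 then - z$0 else if a = 2 \<and> b = 1 then z$0 else 0)"

definition dX :: "('n::finite state \<Rightarrow> 'a::real_normed_vector) \<Rightarrow> 'n state \<Rightarrow> 'n \<Rightarrow> 3 \<Rightarrow> 'a" where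
  "dX f p i a = frechet_derivative f (at p) (axis i (axis a 1), 0)"

definition dY :: "('n::finite state \<Rightarrow> 'a::real_normed_vector) \<Rightarrow> 'n state \<Rightarrow> 'n \<Rightarrow> 3 \<Rightarrow> 'a" where
  "dY f p i a = frechet_derivative f (at p) (0, axis i (axis a 1))"

definition pbracket :: "('n::finite state \<Rightarrow> 'a::real_normed_algebra) \<Rightarrow> ('n state \<Rightarrow> 'a) \<Rightarrow> 'n state \<Rightarrow> 'a" where
  "pbracket f g p =
     (\<Sum>i\<in>UNIV. \<Sum>a\<in>UNIV. \<Sum>b\<in>UNIV.
        Jst (fst p $ i) a b *\<^sub>R (dX f p i a * dX g p i b)
      + Jst (snd p $ i) a b *\<^sub>R (dY f p i a * dY g p i b))"

definition casimir_functions :: "('n::finite state \<Rightarrow> real) set" where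
  "casimir_functions = (\<Union>i. {\<lambda>p. casimir (fst p $ i), \<lambda>p. casimir (snd p $ i)})"

end

theory Submission
  imports Defs
begin

text \<open>
  Write \<open>Rhat \<alpha> \<beta> x y = (N\<^sub>u, N\<^sub>v) / D\<close> with polynomial numerators and
  \<open>D = \<langle>x + y, x + y\<rangle> + q\<^sup>2\<close>.  Then every statement about a single site is a
  polynomial identity: \<open>Rhat\<close> preserves \<open>x + y\<close> and the Casimirs, it refactorises the Lax
  matrices, \<open>L(y,\<beta>) L(x,\<alpha>) = L(u,\<alpha>) L(v,\<beta>)\<close>, and, by the quotient rule, the
  components of \<open>u\<close> and \<open>v\<close> have the brackets of two independent copies of the
  Lie-Poisson bracket.  The transfer map applies \<open>Rhat\<close> at every site and shifts the
  \<open>y\<close>'s cyclically, so the chain rule makes it a Poisson map, and the monodromy of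
  \<open>T p\<close> is the refactorised monodromy of \<open>p\<close> with one factor moved from the end to
  the front, which has the same eigenvalues.  For the involutivity, the derivative of
  \<open>tr M(\<zeta>)\<close> in the coordinates of one Lax factor is \<open>tr (M' E\<^sub>a)\<close>, \<open>M'\<close> being the
  product with that factor removed; the \<open>r\<close>-matrix identity of a single factor turns
  \<open>(\<zeta> - \<eta>) {tr M(\<zeta>), tr M(\<eta>)}\<close> into a telescoping sum.
\<close>

section \<open>The map \<open>Rhat\<close> as a quotient of polynomials\<close>

lemma vec3_nth [simp]: "vec3 a b c $ 0 = a" "vec3 a b c $ 1 = b" "vec3 a b c $ 2 = c"
  by (simp_all add: vec3_def)

lemma UNIV_3_eq: "(UNIV :: 3 set) = {0, 1, 2}"
proof -
  have "(3::3) = 0" by simp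
  with UNIV_3 have "UNIV = {1, 2, 0::3}" by simp
  then show ?thesis by blast
qed

lemma sum_UNIV_3: "sum f (UNIV :: 3 set) = f 0 + f 1 + f 2"
  unfolding UNIV_3_eq by (simp add: add.assoc)

lemma cases_3: obtains "c = (0::3)" | "c = 1" | "c = 2"
  using UNIV_3_eq by auto

lemma all_3: "(\<forall>c::3. P c) \<longleftrightarrow> P 0 \<and> P 1 \<and> P 2"
  by (metis cases_3)

lemma UNIV_2_eq: "(UNIV :: 2 set) = {0, 1}"
proof -
  have "(2::2) = 0" by simp
  with UNIV_2 have "UNIV = {1, 0::2}" by simp
  then show ?thesis by blast
qed

lemma sum_UNIV_2: "sum f (UNIV :: 2 set) = f 0 + f 1"
  unfolding UNIV_2_eq by simp

lemma all_2: "(\<forall>c::2. P c) \<longleftrightarrow> P 0 \<and> P 1"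
  by (metis UNIV_2_eq UNIV_I empty_iff insertE)

definition mcross :: "real^3 \<Rightarrow> real^3 \<Rightarrow> real^3" where
  "mcross x y = vec3 (x$1 * y$2 - x$2 * y$1) (x$0 * y$2 - x$2 * y$0) (x$1 * y$0 - x$0 * y$1)"

definition Rden :: "real^3 \<Rightarrow> real^3 \<Rightarrow> real \<Rightarrow> real" where
  "Rden x y q = mink (x + y) (x + y) + q^2"

definition Rnum_fst :: "real^3 \<Rightarrow> real^3 \<Rightarrow> real \<Rightarrow> real^3" where
  "Rnum_fst x y q = (mink x x - mink y y + q^2) *\<^sub>R x + (2 * mink x (x + y)) *\<^sub>R y + (2 * q) *\<^sub>R mcross x y"

definition Rnum_snd :: "real^3 \<Rightarrow> real^3 \<Rightarrow> real \<Rightarrow> real^3" where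
  "Rnum_snd x y q = (2 * mink y (x + y)) *\<^sub>R x + (mink y y - mink x x + q^2) *\<^sub>R y - (2 * q) *\<^sub>R mcross x y"

lemma generic_Rden: "p \<in> generic \<alpha> \<beta> \<Longrightarrow> Rden (fst p $ i) (snd p $ i) (\<alpha> - \<beta>) \<noteq> 0"
  by (simp add: generic_def Rden_def)

lemma Rhat_eq_quotient:
  assumes "Rden x y (\<alpha> - \<beta>) \<noteq> 0"
  shows "Rhat \<alpha> \<beta> x y = ((1 / Rden x y (\<alpha> - \<beta>)) *\<^sub>R Rnum_fst x y (\<alpha> - \<beta>),
                           (1 / Rden x y (\<alpha> - \<beta>)) *\<^sub>R Rnum_snd x y (\<alpha> - \<beta>))"
proof -
  define q where "q = \<alpha> - \<beta>"
  define D where "D = Rden x y q"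
  have D: "D \<noteq> 0" using assms by (simp add: D_def q_def)
  have k1: "khat x y q = (mink x x - mink y y + q^2) / D"
    by (simp add: khat_def D_def Rden_def)
  have k2: "khat y x q = (mink y y - mink x x + q^2) / D"
    by (simp add: khat_def D_def Rden_def add.commute)
  have "D - (mink y y - mink x x + q^2) = 2 * mink x (x + y)"
    by (simp add: D_def Rden_def mink_def) algebra
  then have m1: "1 - khat y x q = (2 * mink x (x + y)) / D"
    using D by (simp add: k2 field_simps)
  have "D - (mink x x - mink y y + q^2) = 2 * mink y (x + y)"
    by (simp add: D_def Rden_def mink_def) algebra
  then have m2: "1 - khat x y q = (2 * mink y (x + y)) / D"
    using D by (simp add: k1 field_simps)
  have r: "rhat x y q = (1 / D) *\<^sub>R mcross x y"
    by (simp add: rhat_def mcross_def D_def Rden_def)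
  have "fst (Rhat \<alpha> \<beta> x y) = (1 / D) *\<^sub>R Rnum_fst x y q"
    unfolding Rhat_def Let_def q_def[symmetric] fst_conv k1 m1 r Rnum_fst_def
    by (simp add: scaleR_add_right divide_inverse_commute)
  moreover have "snd (Rhat \<alpha> \<beta> x y) = (1 / D) *\<^sub>R Rnum_snd x y q"
    unfolding Rhat_def Let_def q_def[symmetric] snd_conv k2 m2 r Rnum_snd_def
    by (simp add: scaleR_add_right scaleR_diff_right divide_inverse_commute)
  ultimately show ?thesis by (simp add: prod_eq_iff D_def q_def)
qed

lemma Rhat_fst_add_snd: "fst (Rhat \<alpha> \<beta> x y) + snd (Rhat \<alpha> \<beta> x y) = x + y"
  unfolding Rhat_def Let_def by (simp add: algebra_simps)

lemma casimir_scaleR: "casimir (r *\<^sub>R z) = r^2 * casimir z"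
  by (simp add: casimir_def algebra_simps power2_eq_square)

lemma casimir_Rhat:
  assumes "Rden x y (\<alpha> - \<beta>) \<noteq> 0"
  shows "casimir (fst (Rhat \<alpha> \<beta> x y)) = casimir x" and "casimir (snd (Rhat \<alpha> \<beta> x y)) = casimir y"
proof -
  have "casimir (Rnum_fst x y q) = (Rden x y q)^2 * casimir x"
    and "casimir (Rnum_snd x y q) = (Rden x y q)^2 * casimir y" for q
    by (simp_all add: casimir_def Rden_def Rnum_fst_def Rnum_snd_def mcross_def mink_def; algebra)+
  then show "casimir (fst (Rhat \<alpha> \<beta> x y)) = casimir x" and "casimir (snd (Rhat \<alpha> \<beta> x y)) = casimir y"
    using assms by (simp_all add: Rhat_eq_quotient casimir_scaleR power2_eq_square)
qed

definition Lmat_scaled :: "real^3 \<Rightarrow> real \<Rightarrow> real \<Rightarrow> complex \<Rightarrow> complex^2^2" where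
  "Lmat_scaled z D a \<zeta> = (\<chi> r c.
     if r = 0 \<and> c = 0 then of_real D * (\<zeta> - \<i> * of_real a) + \<i> * of_real (z$2)
     else if r = 0 \<and> c = 1 then complex_of_real (z$0 + z$1)
     else if r = 1 \<and> c = 0 then complex_of_real (z$0 - z$1)
     else of_real D * (\<zeta> - \<i> * of_real a) - \<i> * of_real (z$2))"

lemma Lmat_scaleR_eq: "D \<noteq> 0 \<Longrightarrow> Lmat ((1 / D) *\<^sub>R z) a \<zeta> = (1 / D) *\<^sub>R Lmat_scaled z D a \<zeta>"
  by (simp add: vec_eq_iff all_2 Lmat_def Lmat_scaled_def complex_eq_iff field_simps)

lemma Lmat_scaled_Rnum_mult:
  "Lmat_scaled (Rnum_fst x y (\<alpha> - \<beta>)) (Rden x y (\<alpha> - \<beta>)) \<alpha> \<zeta>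
     ** Lmat_scaled (Rnum_snd x y (\<alpha> - \<beta>)) (Rden x y (\<alpha> - \<beta>)) \<beta> \<zeta>
   = (Rden x y (\<alpha> - \<beta>))^2 *\<^sub>R (Lmat y \<beta> \<zeta> ** Lmat x \<alpha> \<zeta>)"
  unfolding vec_eq_iff matrix_matrix_mult_def all_2
  by (simp add: sum_UNIV_2 Lmat_def Lmat_scaled_def complex_eq_iff Rden_def Rnum_fst_def Rnum_snd_def
      mcross_def mink_def; algebra)

lemma Lmat_refactorization:
  assumes "Rden x y (\<alpha> - \<beta>) \<noteq> 0"
  shows "Lmat y \<beta> \<zeta> ** Lmat x \<alpha> \<zeta>
           = Lmat (fst (Rhat \<alpha> \<beta> x y)) \<alpha> \<zeta> ** Lmat (snd (Rhat \<alpha> \<beta> x y)) \<beta> \<zeta>"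
  using assms
  by (simp add: Rhat_eq_quotient Lmat_scaleR_eq Lmat_scaled_Rnum_mult matrix_scalar_ac
      scalar_matrix_assoc[symmetric] power2_eq_square)

section \<open>Cyclic successor and ordered matrix products\<close>

lemma csucc_gt: "i \<noteq> Max UNIV \<Longrightarrow> i < csucc (i::'n::{finite,linorder})"
proof -
  assume i: "i \<noteq> Max UNIV"
  then have "i < Max UNIV" by (simp add: order.not_eq_order_implies_strict)
  then have "{j. i < j} \<noteq> {}" by blast
  then have "Min {j. i < j} \<in> {j. i < j}" by (intro Min_in) auto
  then show ?thesis using i by (simp add: csucc_def)
qed

lemma csucc_le: "i < j \<Longrightarrow> csucc (i::'n::{finite,linorder}) \<le> j"
proof -
  assume ij: "i < j"
  then have "i \<noteq> Max UNIV" using Max_ge[of UNIV j] by auto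
  then show ?thesis using ij by (simp add: csucc_def)
qed

lemma csucc_Max: "csucc (Max UNIV :: 'n::{finite,linorder}) = Min UNIV"
  by (simp add: csucc_def)

lemma inj_csucc: "inj (csucc :: 'n::{finite,linorder} \<Rightarrow> 'n)"
proof -
  have "csucc i \<noteq> csucc j" if ij: "i < j" for i j :: 'n
  proof -
    have "i \<noteq> Max UNIV" using ij Max_ge[of UNIV j] by auto
    then have "i < csucc i" by (rule csucc_gt)
    show ?thesis
    proof (cases "j = Max UNIV")
      case True
      then have "csucc j \<le> i" by (simp add: csucc_Max)
      then show ?thesis using \<open>i < csucc i\<close> by simp
    next
      case False
      then show ?thesis using csucc_gt[of j] csucc_le[OF ij] by simp
    qed
  qed
  then show ?thesis by (metis injI linorder_neqE)
qed

lemma bij_csucc: "bij (csucc :: 'n::{finite,linorder} \<Rightarrow> 'n)"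
  using finite_UNIV_inj_surj[OF _ inj_csucc] inj_csucc by (simp add: bij_def)

definition cpred :: "'n::{finite,linorder} \<Rightarrow> 'n" where
  "cpred = inv csucc"

lemma csucc_cpred [simp]: "csucc (cpred i) = i"
  unfolding cpred_def by (meson bij_csucc bij_inv_eq_iff)

lemma cpred_csucc [simp]: "cpred (csucc i) = i"
  unfolding cpred_def by (meson inj_csucc inv_f_f)

lemma csucc_eq_iff: "csucc j = i \<longleftrightarrow> j = cpred i"
  by auto

lemma sum_reindex_csucc: "(\<Sum>i\<in>UNIV. g (csucc i)) = (\<Sum>i\<in>(UNIV::'n::{finite,linorder} set). g i)"
  using sum.reindex_bij_betw[of csucc UNIV UNIV g] bij_csucc by (simp add: bij_betw_def)

lemma csucc_sorted_list_nth:
  defines "l \<equiv> sorted_list_of_set (UNIV :: 'n::{finite,linorder} set)"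
  assumes k: "Suc k < length l"
  shows "csucc (l ! k) = l ! Suc k"
proof -
  have strict: "sorted_wrt (<) l" by (simp add: l_def)
  have nth_less_iff: "l ! a < l ! b \<longleftrightarrow> a < b" if "a < length l" "b < length l" for a b
    using that sorted_wrt_nth_less[OF strict] by (metis less_asym linorder_neqE)
  have "l ! k < l ! Suc k" using k nth_less_iff by simp
  then have le: "csucc (l ! k) \<le> l ! Suc k" by (rule csucc_le)
  have "l ! k \<noteq> Max UNIV" using \<open>l ! k < l ! Suc k\<close> Max_ge[of UNIV "l ! Suc k"] by auto
  then have gt: "l ! k < csucc (l ! k)" by (rule csucc_gt)
  have "csucc (l ! k) \<in> set l" by (simp add: l_def)
  then obtain m where m: "m < length l" "csucc (l ! k) = l ! m" by (auto simp: in_set_conv_nth)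
  with gt k have "Suc k \<le> m" using nth_less_iff by auto
  then have "l ! Suc k \<le> csucc (l ! k)"
    using m k nth_less_iff[of m "Suc k"] by (cases "Suc k = m") auto
  with le show ?thesis by simp
qed

lemma csucc_sorted_list_last:
  defines "l \<equiv> sorted_list_of_set (UNIV :: 'n::{finite,linorder} set)"
  shows "csucc (last l) = hd l"
proof -
  have "l \<noteq> []" and "sorted l" by (simp_all add: l_def)
  have "j \<le> last l" for j
  proof -
    have "j \<in> set l" by (simp add: l_def)
    then obtain m where "m < length l" "j = l ! m" by (auto simp: in_set_conv_nth)
    then show ?thesis
      using \<open>sorted l\<close> \<open>l \<noteq> []\<close> by (simp add: last_conv_nth sorted_nth_mono)
  qed
  then have "last l = Max UNIV" by (intro Max_eqI[symmetric]) auto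
  moreover have "hd l = Min UNIV" by (simp add: l_def sorted_list_of_set_nonempty)
  ultimately show ?thesis by (simp add: csucc_Max)
qed

lemma map_csucc_sorted_list:
  defines "l \<equiv> sorted_list_of_set (UNIV :: 'n::{finite,linorder} set)"
  shows "map csucc l = rotate1 l"
proof (rule nth_equalityI)
  fix k assume "k < length (map csucc l)"
  then have k: "k < length l" by simp
  show "map csucc l ! k = rotate1 l ! k"
  proof (cases "Suc k < length l")
    case True
    then show ?thesis using csucc_sorted_list_nth[OF True[unfolded l_def]] by (simp add: l_def nth_rotate1)
  next
    case False
    then have "k = length l - 1" and "l \<noteq> []" using k by auto
    then have "l ! k = last l" and "rotate1 l ! k = hd l"
      by (simp_all add: last_conv_nth hd_conv_nth nth_rotate1)
    then show ?thesis using k csucc_sorted_list_last by (simp add: l_def)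
  qed
qed simp

definition matprod_rev :: "('a::semiring_1^'n^'n) list \<Rightarrow> 'a^'n^'n" where
  "matprod_rev As = fold (\<lambda>A P. A ** P) As (mat 1)"

lemma fold_mult_eq_matprod_rev: "fold (\<lambda>A P. A ** P) As X = matprod_rev As ** X"
proof (induction As arbitrary: X rule: rev_induct)
  case (snoc A As)
  then show ?case by (simp add: matprod_rev_def matrix_mul_assoc)
qed (simp add: matprod_rev_def)

lemma matprod_rev_Nil [simp]: "matprod_rev [] = mat 1"
  by (simp add: matprod_rev_def)

lemma matprod_rev_Cons: "matprod_rev (A # As) = matprod_rev As ** A"
  using fold_mult_eq_matprod_rev[of As A] by (simp add: matprod_rev_def)

lemma matprod_rev_append: "matprod_rev (As @ Bs) = matprod_rev Bs ** matprod_rev As"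
  using fold_mult_eq_matprod_rev[of Bs "matprod_rev As"] by (simp add: matprod_rev_def)

definition interleave :: "('i \<Rightarrow> 'a) \<Rightarrow> ('i \<Rightarrow> 'a) \<Rightarrow> 'i list \<Rightarrow> 'a list" where
  "interleave a b xs = concat (map (\<lambda>j. [a j, b j]) xs)"

lemma interleave_simps [simp]:
  "interleave a b [] = []" "interleave a b (j # xs) = a j # b j # interleave a b xs"
  by (simp_all add: interleave_def)

lemma length_interleave [simp]: "length (interleave a b xs) = 2 * length xs"
  by (induction xs) auto

lemma nth_interleave:
  assumes "m < length xs"
  shows "interleave a b xs ! (2 * m) = a (xs ! m)" and "interleave a b xs ! (2 * m + 1) = b (xs ! m)"
  using assms by (induction xs arbitrary: m) (auto simp: nth_Cons' less_Suc_eq_0_disj)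

lemma fold_interleave: "fold (\<lambda>j P. b j ** a j ** P) xs X = fold (\<lambda>A P. A ** P) (interleave a b xs) X"
  by (induction xs arbitrary: X) (simp_all add: matrix_mul_assoc)

section \<open>Isospectrality\<close>

lemma mem_eigenvalues_iff_det: "c \<in> eigenvalues A \<longleftrightarrow> det (A - mat c) = 0"
proof -
  have mult_eq: "(A - mat c) *v v = A *v v - c *s v" for v
    by (simp add: vec_eq_iff matrix_vector_mult_def mat_def sum_UNIV_2 all_2 algebra_simps)
  have "det (A - mat c) \<noteq> 0 \<longleftrightarrow> (\<forall>v. (A - mat c) *v v = 0 \<longrightarrow> v = 0)"
    by (simp add: invertible_det_nz[symmetric] invertible_left_inverse matrix_left_invertible_ker)
  then show ?thesis
    unfolding eigenvalues_def mult_eq by auto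
qed

lemma eigenvalues_mult_commute: "eigenvalues (A ** B) = eigenvalues (B ** A)"
proof -
  have "det (A ** B - mat c) = det (B ** A - mat c)" for c
    by (simp add: det_2 matrix_matrix_mult_def mat_def sum_2) algebra
  then show ?thesis by (simp add: set_eq_iff mem_eigenvalues_iff_det)
qed

lemma eigenvalues_matprod_rev_rotate1: "eigenvalues (matprod_rev (rotate1 As)) = eigenvalues (matprod_rev As)"
  by (cases As) (simp_all add: matprod_rev_append matprod_rev_Cons eigenvalues_mult_commute)

lemma interleave_comp_rotate1:
  "map s xs = rotate1 xs \<Longrightarrow> interleave a (b \<circ> s) xs = rotate1 (interleave b a xs)"
proof -
  have "map s (x # xs) = xs @ [z] \<Longrightarrow> b x # interleave a (b \<circ> s) (x # xs) = interleave b a (x # xs) @ [b z]"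
    for x z xs
    by (induction xs arbitrary: x) auto
  then show "map s xs = rotate1 xs \<Longrightarrow> interleave a (b \<circ> s) xs = rotate1 (interleave b a xs)"
    by (cases xs) auto
qed

lemma matprod_rev_interleave_cong:
  "(\<And>j. j \<in> set xs \<Longrightarrow> b j ** a j = b' j ** a' j) \<Longrightarrow>
   matprod_rev (interleave a b xs) = matprod_rev (interleave a' b' xs)"
  by (induction xs) (simp_all add: matprod_rev_Cons matrix_mul_assoc[symmetric])

definition lax_factors ::
  "real \<Rightarrow> real \<Rightarrow> complex \<Rightarrow> 'n::{finite,linorder} state \<Rightarrow> (complex^2^2) list" where
  "lax_factors \<alpha> \<beta> \<zeta> p =
     interleave (\<lambda>i. Lmat (fst p $ i) \<alpha> \<zeta>) (\<lambda>i. Lmat (snd p $ i) \<beta> \<zeta>) (sorted_list_of_set UNIV)"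

lemma monodromy_eq_matprod_rev: "monodromy \<alpha> \<beta> \<zeta> p = matprod_rev (lax_factors \<alpha> \<beta> \<zeta> p)"
  unfolding monodromy_def lax_factors_def fold_interleave fold_mult_eq_matprod_rev by simp

lemma Tmap_fst_nth: "fst (Tmap \<alpha> \<beta> p) $ i = fst (Rhat \<alpha> \<beta> (fst p $ i) (snd p $ i))"
  by (simp add: Tmap_def)

lemma Tmap_snd_nth: "snd (Tmap \<alpha> \<beta> p) $ i = snd (Rhat \<alpha> \<beta> (fst p $ csucc i) (snd p $ csucc i))"
  by (simp add: Tmap_def)

lemma eigenvalues_monodromy_Tmap:
  assumes p: "(p :: 'n::{finite,linorder} state) \<in> generic \<alpha> \<beta>"
  shows "eigenvalues (monodromy \<alpha> \<beta> \<zeta> (Tmap \<alpha> \<beta> p)) = eigenvalues (monodromy \<alpha> \<beta> \<zeta> p)"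
proof -
  define l where "l = sorted_list_of_set (UNIV :: 'n set)"
  define Lu where "Lu = (\<lambda>i. Lmat (fst (Rhat \<alpha> \<beta> (fst p $ i) (snd p $ i))) \<alpha> \<zeta>)"
  define Lv where "Lv = (\<lambda>i. Lmat (snd (Rhat \<alpha> \<beta> (fst p $ i) (snd p $ i))) \<beta> \<zeta>)"
  have "monodromy \<alpha> \<beta> \<zeta> p = matprod_rev (interleave Lv Lu l)"
    unfolding monodromy_eq_matprod_rev lax_factors_def l_def[symmetric]
    by (rule matprod_rev_interleave_cong) (simp add: Lu_def Lv_def Lmat_refactorization generic_Rden[OF p])
  moreover have "monodromy \<alpha> \<beta> \<zeta> (Tmap \<alpha> \<beta> p) = matprod_rev (interleave Lu (Lv \<circ> csucc) l)"
    by (simp add: monodromy_eq_matprod_rev lax_factors_def l_def[symmetric] Tmap_fst_nth Tmap_snd_nth Lu_def Lv_def o_def)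
  moreover have "interleave Lu (Lv \<circ> csucc) l = rotate1 (interleave Lv Lu l)"
    by (rule interleave_comp_rotate1) (simp add: l_def map_csucc_sorted_list)
  ultimately show ?thesis by (simp add: eigenvalues_matprod_rev_rotate1)
qed

section \<open>Casimirs and linear integrals\<close>

lemma casimir_functions_Tmap:
  fixes c :: "'n::{finite,linorder} state \<Rightarrow> real"
  assumes "c \<in> casimir_functions"
  shows "\<exists>c' \<in> casimir_functions. \<forall>p \<in> generic \<alpha> \<beta>. c (Tmap \<alpha> \<beta> p) = c' p"
proof -
  obtain i where "c = (\<lambda>p. casimir (fst p $ i)) \<or> c = (\<lambda>p. casimir (snd p $ i))"
    using assms unfolding casimir_functions_def by blast
  then show ?thesis
  proof
    assume "c = (\<lambda>p. casimir (fst p $ i))"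
    then have "\<forall>p \<in> generic \<alpha> \<beta>. c (Tmap \<alpha> \<beta> p) = casimir (fst p $ i)"
      by (simp add: Tmap_fst_nth casimir_Rhat generic_Rden)
    then show ?thesis
      by (intro bexI[where x = "\<lambda>p. casimir (fst p $ i)"]) (auto simp: casimir_functions_def)
  next
    assume "c = (\<lambda>p. casimir (snd p $ i))"
    then have "\<forall>p \<in> generic \<alpha> \<beta>. c (Tmap \<alpha> \<beta> p) = casimir (snd p $ csucc i)"
      by (simp add: Tmap_snd_nth casimir_Rhat generic_Rden)
    then show ?thesis
      by (intro bexI[where x = "\<lambda>p. casimir (snd p $ csucc i)"]) (auto simp: casimir_functions_def)
  qed
qed

lemma lin_integral_Tmap: "lin_integral k (Tmap \<alpha> \<beta> (p :: 'n::{finite,linorder} state)) = lin_integral k p"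
proof -
  let ?u = "\<lambda>i. fst (Rhat \<alpha> \<beta> (fst p $ i) (snd p $ i))"
    and ?v = "\<lambda>i. snd (Rhat \<alpha> \<beta> (fst p $ i) (snd p $ i))"
  have "lin_integral k (Tmap \<alpha> \<beta> p) = (\<Sum>i\<in>UNIV. ?u i $ k) + (\<Sum>i\<in>UNIV. ?v (csucc i) $ k)"
    by (simp add: lin_integral_def Tmap_def sum.distrib)
  also have "\<dots> = (\<Sum>i\<in>UNIV. (?u i + ?v i) $ k)"
    by (simp add: sum_reindex_csucc[of "\<lambda>i. ?v i $ k"] sum.distrib)
  also have "\<dots> = lin_integral k p"
    by (simp add: Rhat_fst_add_snd lin_integral_def)
  finally show ?thesis .
qed

section \<open>The Poisson property\<close>

definition lp_form :: "real^3 \<Rightarrow> (3 \<Rightarrow> real) \<Rightarrow> (3 \<Rightarrow> real) \<Rightarrow> real" where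
  "lp_form z F G = (\<Sum>a\<in>UNIV. \<Sum>b\<in>UNIV. Jst z a b * F a * G b)"

text \<open>The bracket at a pair of sites \<open>(x, y)\<close> of two functions given by their derivatives:
  \<open>dF h k\<close> is the derivative of \<open>F\<close> at \<open>(x, y)\<close> in the direction \<open>(h, k)\<close>.\<close>

definition pair_bracket ::
  "real^3 \<Rightarrow> real^3 \<Rightarrow> (real^3 \<Rightarrow> real^3 \<Rightarrow> real) \<Rightarrow> (real^3 \<Rightarrow> real^3 \<Rightarrow> real) \<Rightarrow> real" where
  "pair_bracket x y dF dG =
     lp_form x (\<lambda>a. dF (axis a 1) 0) (\<lambda>a. dG (axis a 1) 0) + lp_form y (\<lambda>a. dF 0 (axis a 1)) (\<lambda>a. dG 0 (axis a 1))"

lemma pair_bracket_add_left: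
  "pair_bracket x y (\<lambda>h k. dF h k + dF' h k) dG = pair_bracket x y dF dG + pair_bracket x y dF' dG"
  by (simp add: pair_bracket_def lp_form_def sum_UNIV_3 algebra_simps)

lemma pair_bracket_add_right:
  "pair_bracket x y dF (\<lambda>h k. dG h k + dG' h k) = pair_bracket x y dF dG + pair_bracket x y dF dG'"
  by (simp add: pair_bracket_def lp_form_def sum_UNIV_3 algebra_simps)

lemma pair_bracket_diff_left:
  "pair_bracket x y (\<lambda>h k. dF h k - dF' h k) dG = pair_bracket x y dF dG - pair_bracket x y dF' dG"
  by (simp add: pair_bracket_def lp_form_def sum_UNIV_3 algebra_simps)

lemma pair_bracket_diff_right:
  "pair_bracket x y dF (\<lambda>h k. dG h k - dG' h k) = pair_bracket x y dF dG - pair_bracket x y dF dG'"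
  by (simp add: pair_bracket_def lp_form_def sum_UNIV_3 algebra_simps)

lemma pair_bracket_scale_left: "pair_bracket x y (\<lambda>h k. r * dF h k) dG = r * pair_bracket x y dF dG"
  by (simp add: pair_bracket_def lp_form_def sum_UNIV_3 algebra_simps)

lemma pair_bracket_scale_right: "pair_bracket x y dF (\<lambda>h k. r * dG h k) = r * pair_bracket x y dF dG"
  by (simp add: pair_bracket_def lp_form_def sum_UNIV_3 algebra_simps)

lemma pair_bracket_sum_left:
  "pair_bracket x y (\<lambda>h k. \<Sum>c\<in>S. dF c h k) dG = (\<Sum>c\<in>S. pair_bracket x y (dF c) dG)"
  by (simp add: pair_bracket_def lp_form_def sum_UNIV_3 sum_distrib_left sum_distrib_right sum.distrib)

lemma pair_bracket_sum_right:
  "pair_bracket x y dF (\<lambda>h k. \<Sum>c\<in>S. dG c h k) = (\<Sum>c\<in>S. pair_bracket x y dF (dG c))"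
  by (simp add: pair_bracket_def lp_form_def sum_UNIV_3 sum_distrib_left sum_distrib_right sum.distrib)

lemma pair_bracket_self: "pair_bracket x y dF dF = 0"
  by (simp add: pair_bracket_def lp_form_def sum_UNIV_3 Jst_def algebra_simps)

lemma pair_bracket_quotient:
  assumes "D \<noteq> (0::real)"
  shows "pair_bracket x y (\<lambda>h k. (D * dF h k - F * dD h k) / D^2) (\<lambda>h k. (D * dG h k - G * dD h k) / D^2)
       = (D * pair_bracket x y dF dG - F * pair_bracket x y dD dG - G * pair_bracket x y dF dD) / D^3"
proof -
  have quotient_eq: "(\<lambda>h k. (D * dK h k - K * dD h k) / D^2) = (\<lambda>h k. (1 / D) * dK h k - (K / D^2) * dD h k)"
    for K dK
    using assms by (auto simp: fun_eq_iff field_simps power2_eq_square)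
  show ?thesis
    unfolding quotient_eq pair_bracket_diff_left pair_bracket_diff_right pair_bracket_scale_left
      pair_bracket_scale_right pair_bracket_self
    using assms by (simp add: field_simps power2_eq_square power3_eq_cube)
qed

lemma pair_bracket_lincomb:
  "pair_bracket x y (\<lambda>h k. \<Sum>c\<in>UNIV. A h k $ c * F1 c + B h k $ c * F2 c)
                    (\<lambda>h k. \<Sum>d\<in>UNIV. A h k $ d * G1 d + B h k $ d * G2 d)
   = (\<Sum>c\<in>UNIV. \<Sum>d\<in>UNIV. F1 c * G1 d * pair_bracket x y (\<lambda>h k. A h k $ c) (\<lambda>h k. A h k $ d)
        + F1 c * G2 d * pair_bracket x y (\<lambda>h k. A h k $ c) (\<lambda>h k. B h k $ d)
        + F2 c * G1 d * pair_bracket x y (\<lambda>h k. B h k $ c) (\<lambda>h k. A h k $ d)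
        + F2 c * G2 d * pair_bracket x y (\<lambda>h k. B h k $ c) (\<lambda>h k. B h k $ d))"
proof -
  have "(\<lambda>h k. A h k $ c * F + B h k $ c * G) = (\<lambda>h k. F * A h k $ c + G * B h k $ c)" for c F G
    by (simp add: fun_eq_iff mult.commute)
  then show ?thesis
    by (simp add: pair_bracket_sum_left pair_bracket_sum_right pair_bracket_add_left pair_bracket_add_right
        pair_bracket_scale_left pair_bracket_scale_right sum_distrib_left algebra_simps)
qed

lemma mink_commute: "mink x y = mink y x"
  by (simp add: mink_def algebra_simps)

lemma mink_add_left: "mink (x + y) z = mink x z + mink y z"
  and mink_add_right: "mink z (x + y) = mink z x + mink z y"
  by (simp_all add: mink_def algebra_simps)

lemma mcross_add_left: "mcross (x + y) z = mcross x z + mcross y z"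
  and mcross_add_right: "mcross z (x + y) = mcross z x + mcross z y"
  by (simp_all add: mcross_def vec_eq_iff vec3_def algebra_simps)

lemma bounded_bilinear_mink: "bounded_bilinear mink"
  by (rule bilinear_conv_bounded_bilinear[THEN iffD1])
    (auto simp: bilinear_def mink_def intro!: linearI; simp add: algebra_simps)

lemma bounded_bilinear_mcross: "bounded_bilinear mcross"
  by (rule bilinear_conv_bounded_bilinear[THEN iffD1])
    (auto simp: bilinear_def mcross_def vec_eq_iff vec3_def intro!: linearI; simp add: algebra_simps)

lemmas has_derivative_mink [derivative_intros] = bounded_bilinear.FDERIV[OF bounded_bilinear_mink]
lemmas has_derivative_mcross [derivative_intros] = bounded_bilinear.FDERIV[OF bounded_bilinear_mcross]

definition dRden :: "real^3 \<Rightarrow> real^3 \<Rightarrow> real^3 \<Rightarrow> real^3 \<Rightarrow> real" where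
  "dRden x y h k = 2 * mink (x + y) (h + k)"

definition dRnum_fst :: "real^3 \<Rightarrow> real^3 \<Rightarrow> real \<Rightarrow> real^3 \<Rightarrow> real^3 \<Rightarrow> real^3" where
  "dRnum_fst x y q h k = (2 * mink x h - 2 * mink y k) *\<^sub>R x + (mink x x - mink y y + q^2) *\<^sub>R h
     + (2 * (mink h (x + y) + mink x (h + k))) *\<^sub>R y + (2 * mink x (x + y)) *\<^sub>R k
     + (2 * q) *\<^sub>R (mcross h y + mcross x k)"

definition dRnum_snd :: "real^3 \<Rightarrow> real^3 \<Rightarrow> real \<Rightarrow> real^3 \<Rightarrow> real^3 \<Rightarrow> real^3" where
  "dRnum_snd x y q h k = (2 * (mink k (x + y) + mink y (h + k))) *\<^sub>R x + (2 * mink y (x + y)) *\<^sub>R h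
     + (2 * mink y k - 2 * mink x h) *\<^sub>R y + (mink y y - mink x x + q^2) *\<^sub>R k
     - (2 * q) *\<^sub>R (mcross h y + mcross x k)"

lemma has_derivative_Rden:
  "((\<lambda>z. Rden (fst z) (snd z) q) has_derivative (\<lambda>w. dRden x y (fst w) (snd w))) (at (x, y))"
  unfolding Rden_def dRden_def
  by (auto intro!: derivative_eq_intros simp: fun_eq_iff mink_add_left mink_add_right mink_commute algebra_simps)

lemma has_derivative_Rnum_fst:
  "((\<lambda>z. Rnum_fst (fst z) (snd z) q) has_derivative (\<lambda>w. dRnum_fst x y q (fst w) (snd w))) (at (x, y))"
  unfolding Rnum_fst_def dRnum_fst_def
  by (auto intro!: derivative_eq_intros simp: fun_eq_iff mink_add_left mink_add_right mink_commute
      mcross_add_left mcross_add_right algebra_simps)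

lemma has_derivative_Rnum_snd:
  "((\<lambda>z. Rnum_snd (fst z) (snd z) q) has_derivative (\<lambda>w. dRnum_snd x y q (fst w) (snd w))) (at (x, y))"
  unfolding Rnum_snd_def dRnum_snd_def
  by (auto intro!: derivative_eq_intros simp: fun_eq_iff mink_add_left mink_add_right mink_commute
      mcross_add_left mcross_add_right algebra_simps)

lemma has_derivative_scaleR_inverse:
  fixes d :: "'a::real_normed_vector \<Rightarrow> real" and n :: "'a \<Rightarrow> 'b::real_normed_vector"
  assumes "(d has_derivative d') (at x)" and "(n has_derivative n') (at x)" and "d x \<noteq> 0"
  shows "((\<lambda>z. (1 / d z) *\<^sub>R n z) has_derivative
           (\<lambda>w. (1 / (d x)^2) *\<^sub>R (d x *\<^sub>R n' w - d' w *\<^sub>R n x))) (at x)"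
  using assms
  by (auto intro!: derivative_eq_intros simp: fun_eq_iff field_simps power2_eq_square scaleR_diff_right)

definition dRhat_fst :: "real^3 \<Rightarrow> real^3 \<Rightarrow> real \<Rightarrow> real^3 \<Rightarrow> real^3 \<Rightarrow> real^3" where
  "dRhat_fst x y q h k =
     (1 / (Rden x y q)^2) *\<^sub>R (Rden x y q *\<^sub>R dRnum_fst x y q h k - dRden x y h k *\<^sub>R Rnum_fst x y q)"

definition dRhat_snd :: "real^3 \<Rightarrow> real^3 \<Rightarrow> real \<Rightarrow> real^3 \<Rightarrow> real^3 \<Rightarrow> real^3" where
  "dRhat_snd x y q h k =
     (1 / (Rden x y q)^2) *\<^sub>R (Rden x y q *\<^sub>R dRnum_snd x y q h k - dRden x y h k *\<^sub>R Rnum_snd x y q)"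

lemma open_Rden_nonzero: "open {z. Rden (fst z) (snd z) q \<noteq> 0}"
  unfolding Rden_def mink_def by (intro open_Collect_neq continuous_intros)

lemma has_derivative_Rhat_fst:
  assumes "Rden x y (\<alpha> - \<beta>) \<noteq> 0"
  shows "((\<lambda>z. fst (Rhat \<alpha> \<beta> (fst z) (snd z))) has_derivative
           (\<lambda>w. dRhat_fst x y (\<alpha> - \<beta>) (fst w) (snd w))) (at (x, y))"
proof (rule has_derivative_transform_within_open[OF _ open_Rden_nonzero])
  show "((\<lambda>z. (1 / Rden (fst z) (snd z) (\<alpha> - \<beta>)) *\<^sub>R Rnum_fst (fst z) (snd z) (\<alpha> - \<beta>)) has_derivative
      (\<lambda>w. dRhat_fst x y (\<alpha> - \<beta>) (fst w) (snd w))) (at (x, y))"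
    using has_derivative_scaleR_inverse[OF has_derivative_Rden has_derivative_Rnum_fst] assms
    by (simp add: dRhat_fst_def)
qed (use assms in \<open>auto simp: Rhat_eq_quotient\<close>)

lemma has_derivative_Rhat_snd:
  assumes "Rden x y (\<alpha> - \<beta>) \<noteq> 0"
  shows "((\<lambda>z. snd (Rhat \<alpha> \<beta> (fst z) (snd z))) has_derivative
           (\<lambda>w. dRhat_snd x y (\<alpha> - \<beta>) (fst w) (snd w))) (at (x, y))"
proof (rule has_derivative_transform_within_open[OF _ open_Rden_nonzero])
  show "((\<lambda>z. (1 / Rden (fst z) (snd z) (\<alpha> - \<beta>)) *\<^sub>R Rnum_snd (fst z) (snd z) (\<alpha> - \<beta>)) has_derivative
      (\<lambda>w. dRhat_snd x y (\<alpha> - \<beta>) (fst w) (snd w))) (at (x, y))"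
    using has_derivative_scaleR_inverse[OF has_derivative_Rden has_derivative_Rnum_snd] assms
    by (simp add: dRhat_snd_def)
qed (use assms in \<open>auto simp: Rhat_eq_quotient\<close>)

text \<open>The left-hand sides below are the numerators that \<open>pair_bracket_quotient\<close> produces for the
  components of \<open>Rnum_fst / Rden\<close> and \<open>Rnum_snd / Rden\<close>.\<close>

lemmas Rhat_polynomial_defs = pair_bracket_def lp_form_def sum_UNIV_3 Jst_def Rden_def Rnum_fst_def
  Rnum_snd_def dRden_def dRnum_fst_def dRnum_snd_def mink_def mcross_def axis_def

lemma Rnum_fst_fst_bracket:
  "Rden x y q * pair_bracket x y (\<lambda>h k. dRnum_fst x y q h k $ c) (\<lambda>h k. dRnum_fst x y q h k $ d)
   - Rnum_fst x y q $ c * pair_bracket x y (dRden x y) (\<lambda>h k. dRnum_fst x y q h k $ d)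
   - Rnum_fst x y q $ d * pair_bracket x y (\<lambda>h k. dRnum_fst x y q h k $ c) (dRden x y)
   = (Rden x y q)^2 * Jst (Rnum_fst x y q) c d"
  by (cases c rule: cases_3; cases d rule: cases_3; hypsubst_thin; simp add: Rhat_polynomial_defs; algebra)

lemma Rnum_fst_snd_bracket:
  "Rden x y q * pair_bracket x y (\<lambda>h k. dRnum_fst x y q h k $ c) (\<lambda>h k. dRnum_snd x y q h k $ d)
   - Rnum_fst x y q $ c * pair_bracket x y (dRden x y) (\<lambda>h k. dRnum_snd x y q h k $ d)
   - Rnum_snd x y q $ d * pair_bracket x y (\<lambda>h k. dRnum_fst x y q h k $ c) (dRden x y) = 0"
  by (cases c rule: cases_3; cases d rule: cases_3; hypsubst_thin; simp add: Rhat_polynomial_defs; algebra)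

lemma Rnum_snd_fst_bracket:
  "Rden x y q * pair_bracket x y (\<lambda>h k. dRnum_snd x y q h k $ c) (\<lambda>h k. dRnum_fst x y q h k $ d)
   - Rnum_snd x y q $ c * pair_bracket x y (dRden x y) (\<lambda>h k. dRnum_fst x y q h k $ d)
   - Rnum_fst x y q $ d * pair_bracket x y (\<lambda>h k. dRnum_snd x y q h k $ c) (dRden x y) = 0"
  by (cases c rule: cases_3; cases d rule: cases_3; hypsubst_thin; simp add: Rhat_polynomial_defs; algebra)

lemma Rnum_snd_snd_bracket:
  "Rden x y q * pair_bracket x y (\<lambda>h k. dRnum_snd x y q h k $ c) (\<lambda>h k. dRnum_snd x y q h k $ d)
   - Rnum_snd x y q $ c * pair_bracket x y (dRden x y) (\<lambda>h k. dRnum_snd x y q h k $ d)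
   - Rnum_snd x y q $ d * pair_bracket x y (\<lambda>h k. dRnum_snd x y q h k $ c) (dRden x y)
   = (Rden x y q)^2 * Jst (Rnum_snd x y q) c d"
  by (cases c rule: cases_3; cases d rule: cases_3; hypsubst_thin; simp add: Rhat_polynomial_defs; algebra)

lemma Jst_scaleR: "Jst (r *\<^sub>R z) a b = r * Jst z a b"
  by (simp add: Jst_def)

lemma pair_bracket_dRhat:
  assumes D: "Rden x y q \<noteq> 0"
  shows "pair_bracket x y (\<lambda>h k. dRhat_fst x y q h k $ c) (\<lambda>h k. dRhat_fst x y q h k $ d)
           = Jst ((1 / Rden x y q) *\<^sub>R Rnum_fst x y q) c d"
    and "pair_bracket x y (\<lambda>h k. dRhat_fst x y q h k $ c) (\<lambda>h k. dRhat_snd x y q h k $ d) = 0"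
    and "pair_bracket x y (\<lambda>h k. dRhat_snd x y q h k $ c) (\<lambda>h k. dRhat_fst x y q h k $ d) = 0"
    and "pair_bracket x y (\<lambda>h k. dRhat_snd x y q h k $ c) (\<lambda>h k. dRhat_snd x y q h k $ d)
           = Jst ((1 / Rden x y q) *\<^sub>R Rnum_snd x y q) c d"
proof -
  have fst_nth: "(\<lambda>h k. dRhat_fst x y q h k $ c) =
      (\<lambda>h k. (Rden x y q * dRnum_fst x y q h k $ c - Rnum_fst x y q $ c * dRden x y h k) / (Rden x y q)^2)" for c
    by (simp add: fun_eq_iff dRhat_fst_def divide_inverse mult.commute)
  have snd_nth: "(\<lambda>h k. dRhat_snd x y q h k $ c) =
      (\<lambda>h k. (Rden x y q * dRnum_snd x y q h k $ c - Rnum_snd x y q $ c * dRden x y h k) / (Rden x y q)^2)" for c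
    by (simp add: fun_eq_iff dRhat_snd_def divide_inverse mult.commute)
  show "pair_bracket x y (\<lambda>h k. dRhat_fst x y q h k $ c) (\<lambda>h k. dRhat_fst x y q h k $ d)
           = Jst ((1 / Rden x y q) *\<^sub>R Rnum_fst x y q) c d"
    unfolding fst_nth pair_bracket_quotient[OF D] Rnum_fst_fst_bracket
    using D by (simp add: Jst_scaleR power2_eq_square power3_eq_cube)
  show "pair_bracket x y (\<lambda>h k. dRhat_fst x y q h k $ c) (\<lambda>h k. dRhat_snd x y q h k $ d) = 0"
    unfolding fst_nth snd_nth pair_bracket_quotient[OF D] Rnum_fst_snd_bracket by simp
  show "pair_bracket x y (\<lambda>h k. dRhat_snd x y q h k $ c) (\<lambda>h k. dRhat_fst x y q h k $ d) = 0"
    unfolding fst_nth snd_nth pair_bracket_quotient[OF D] Rnum_snd_fst_bracket by simp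
  show "pair_bracket x y (\<lambda>h k. dRhat_snd x y q h k $ c) (\<lambda>h k. dRhat_snd x y q h k $ d)
           = Jst ((1 / Rden x y q) *\<^sub>R Rnum_snd x y q) c d"
    unfolding snd_nth pair_bracket_quotient[OF D] Rnum_snd_snd_bracket
    using D by (simp add: Jst_scaleR power2_eq_square power3_eq_cube)
qed

lemma pair_bracket_dRhat_lincomb:
  assumes "Rden x y (\<alpha> - \<beta>) \<noteq> 0"
  shows "pair_bracket x y
      (\<lambda>h k. \<Sum>c\<in>UNIV. dRhat_fst x y (\<alpha> - \<beta>) h k $ c * F1 c + dRhat_snd x y (\<alpha> - \<beta>) h k $ c * F2 c)
      (\<lambda>h k. \<Sum>d\<in>UNIV. dRhat_fst x y (\<alpha> - \<beta>) h k $ d * G1 d + dRhat_snd x y (\<alpha> - \<beta>) h k $ d * G2 d)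
    = lp_form (fst (Rhat \<alpha> \<beta> x y)) F1 G1 + lp_form (snd (Rhat \<alpha> \<beta> x y)) F2 G2"
  unfolding pair_bracket_lincomb pair_bracket_dRhat[OF assms] Rhat_eq_quotient[OF assms]
  by (simp add: lp_form_def sum.distrib algebra_simps)

lemma has_derivative_vec_lambda:
  fixes f :: "'i::finite \<Rightarrow> 'a::euclidean_space \<Rightarrow> 'b::real_normed_vector"
  assumes "\<And>i. (f i has_derivative f' i) (at x)"
  shows "((\<lambda>y. \<chi> i. f i y) has_derivative (\<lambda>h. \<chi> i. f' i h)) (at x)"
proof -
  have "bounded_linear (f' i)" for i
    using assms has_derivative_bounded_linear by blast
  then have "linear (\<lambda>h. \<chi> i. f' i h)"
    by (intro linearI) (simp_all add: vec_eq_iff bounded_linear.linear linear_add linear_scale)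
  then have "bounded_linear (\<lambda>h. \<chi> i. f' i h)"
    by (simp add: linear_conv_bounded_linear)
  moreover have "((\<lambda>y. \<chi> i. (1 / norm (y - x)) *\<^sub>R (f i y - (f i x + f' i (y - x)))) \<longlongrightarrow> (\<chi> i. 0)) (at x)"
    using assms by (intro tendsto_vec_lambda) (simp add: has_derivative_within)
  moreover have "(\<lambda>y. \<chi> i. (1 / norm (y - x)) *\<^sub>R (f i y - (f i x + f' i (y - x))))
    = (\<lambda>y. (1 / norm (y - x)) *\<^sub>R ((\<chi> i. f i y) - ((\<chi> i. f i x) + (\<chi> i. f' i (y - x)))))"
    by (simp add: vec_eq_iff fun_eq_iff)
  ultimately show ?thesis
    by (simp add: has_derivative_within zero_vec_def)
qed

lemma axis_zero: "axis i 0 = 0"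
  by (simp add: vec_eq_iff axis_def)

lemma linear_axis_pair_expansion:
  fixes F :: "'n::finite state \<Rightarrow> real"
  assumes "linear F"
  shows "F (axis i v, axis j w) = (\<Sum>c\<in>UNIV. v $ c * F (axis i (axis c 1), 0) + w $ c * F (0, axis j (axis c 1)))"
proof -
  have expansion: "(axis i v, axis j w) =
      (\<Sum>c\<in>UNIV. v $ c *\<^sub>R (axis i (axis c 1), 0) + w $ c *\<^sub>R (0, axis j (axis c 1)))"
    by (simp add: sum_UNIV_3 prod_eq_iff vec_eq_iff axis_def all_3)
  show ?thesis
    unfolding expansion linear_sum[OF assms] linear_add[OF assms] linear_scale[OF assms] by simp
qed

definition dTmap :: "real \<Rightarrow> real \<Rightarrow> 'n::{finite,linorder} state \<Rightarrow> 'n state \<Rightarrow> 'n state" where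
  "dTmap \<alpha> \<beta> p h =
     ((\<chi> i. dRhat_fst (fst p $ i) (snd p $ i) (\<alpha> - \<beta>) (fst h $ i) (snd h $ i)),
      (\<chi> i. dRhat_snd (fst p $ csucc i) (snd p $ csucc i) (\<alpha> - \<beta>) (fst h $ csucc i) (snd h $ csucc i)))"

lemma has_derivative_Tmap:
  fixes p :: "'n::{finite,linorder} state"
  assumes p: "p \<in> generic \<alpha> \<beta>"
  shows "(Tmap \<alpha> \<beta> has_derivative dTmap \<alpha> \<beta> p) (at p)"
proof -
  have site: "((\<lambda>p::'n state. (fst p $ i, snd p $ i)) has_derivative (\<lambda>h. (fst h $ i, snd h $ i))) (at p)" for i
    by (auto intro!: derivative_eq_intros bounded_linear.has_derivative[OF bounded_linear_vec_nth])
  have "((\<lambda>p. fst (Rhat \<alpha> \<beta> (fst p $ i) (snd p $ i))) has_derivative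
      (\<lambda>h. dRhat_fst (fst p $ i) (snd p $ i) (\<alpha> - \<beta>) (fst h $ i) (snd h $ i))) (at p)" for i
    using has_derivative_compose[OF site has_derivative_Rhat_fst[OF generic_Rden[OF p]]] by simp
  moreover have "((\<lambda>p. snd (Rhat \<alpha> \<beta> (fst p $ i) (snd p $ i))) has_derivative
      (\<lambda>h. dRhat_snd (fst p $ i) (snd p $ i) (\<alpha> - \<beta>) (fst h $ i) (snd h $ i))) (at p)" for i
    using has_derivative_compose[OF site has_derivative_Rhat_snd[OF generic_Rden[OF p]]] by simp
  ultimately show ?thesis
    unfolding Tmap_def[abs_def] dTmap_def by (intro has_derivative_Pair has_derivative_vec_lambda)
qed

lemma dRhat_zero: "dRhat_fst x y q 0 0 = 0" "dRhat_snd x y q 0 0 = 0"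
  by (simp_all add: dRhat_fst_def dRhat_snd_def dRnum_fst_def dRnum_snd_def dRden_def mink_def mcross_def
      vec_eq_iff vec3_def)

lemma dTmap_axis:
  "dTmap \<alpha> \<beta> p (axis i h, axis i k) =
     (axis i (dRhat_fst (fst p $ i) (snd p $ i) (\<alpha> - \<beta>) h k),
      axis (cpred i) (dRhat_snd (fst p $ i) (snd p $ i) (\<alpha> - \<beta>) h k))"
  by (auto simp: dTmap_def vec_eq_iff axis_def dRhat_zero csucc_eq_iff zero_vec_def[symmetric])

lemma frechet_derivative_comp_Tmap:
  fixes f :: "'n::{finite,linorder} state \<Rightarrow> real"
  assumes p: "p \<in> generic \<alpha> \<beta>" and f: "f differentiable (at (Tmap \<alpha> \<beta> p))"
  shows "frechet_derivative (f \<circ> Tmap \<alpha> \<beta>) (at p) (axis i h, axis i k) =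
    (\<Sum>c\<in>UNIV. dRhat_fst (fst p $ i) (snd p $ i) (\<alpha> - \<beta>) h k $ c * dX f (Tmap \<alpha> \<beta> p) i c
              + dRhat_snd (fst p $ i) (snd p $ i) (\<alpha> - \<beta>) h k $ c * dY f (Tmap \<alpha> \<beta> p) (cpred i) c)"
proof -
  let ?F = "frechet_derivative f (at (Tmap \<alpha> \<beta> p))"
  have F: "(f has_derivative ?F) (at (Tmap \<alpha> \<beta> p))"
    using f by (rule frechet_derivative_works[THEN iffD1])
  then have "linear ?F"
    using has_derivative_bounded_linear bounded_linear.linear by blast
  have "frechet_derivative (f \<circ> Tmap \<alpha> \<beta>) (at p) = ?F \<circ> dTmap \<alpha> \<beta> p"
    by (rule frechet_derivative_at[symmetric], rule diff_chain_at[OF has_derivative_Tmap[OF p] F])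
  then show ?thesis
    by (simp add: dTmap_axis linear_axis_pair_expansion[OF \<open>linear ?F\<close>] dX_def dY_def)
qed

lemma pbracket_eq_sum_pair_bracket:
  "pbracket (f :: 'n::finite state \<Rightarrow> real) g p =
     (\<Sum>i\<in>UNIV. pair_bracket (fst p $ i) (snd p $ i)
        (\<lambda>h k. frechet_derivative f (at p) (axis i h, axis i k))
        (\<lambda>h k. frechet_derivative g (at p) (axis i h, axis i k)))"
  by (simp add: pbracket_def pair_bracket_def lp_form_def dX_def dY_def axis_zero sum.distrib mult.assoc)

lemma pbracket_eq_sum_lp_form:
  "pbracket (f :: 'n::finite state \<Rightarrow> real) g p =
     (\<Sum>i\<in>UNIV. lp_form (fst p $ i) (dX f p i) (dX g p i)) + (\<Sum>i\<in>UNIV. lp_form (snd p $ i) (dY f p i) (dY g p i))"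
  by (simp add: pbracket_def lp_form_def sum.distrib mult.assoc)

lemma pbracket_comp_Tmap:
  fixes f g :: "'n::{finite,linorder} state \<Rightarrow> real"
  assumes p: "p \<in> generic \<alpha> \<beta>"
    and f: "f differentiable (at (Tmap \<alpha> \<beta> p))" and g: "g differentiable (at (Tmap \<alpha> \<beta> p))"
  shows "pbracket (f \<circ> Tmap \<alpha> \<beta>) (g \<circ> Tmap \<alpha> \<beta>) p = pbracket f g (Tmap \<alpha> \<beta> p)"
proof -
  let ?T = "Tmap \<alpha> \<beta> p"
  have "pbracket (f \<circ> Tmap \<alpha> \<beta>) (g \<circ> Tmap \<alpha> \<beta>) p
      = (\<Sum>i\<in>UNIV. lp_form (fst ?T $ i) (dX f ?T i) (dX g ?T i)
                   + lp_form (snd ?T $ cpred i) (dY f ?T (cpred i)) (dY g ?T (cpred i)))"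
    unfolding pbracket_eq_sum_pair_bracket frechet_derivative_comp_Tmap[OF p f] frechet_derivative_comp_Tmap[OF p g]
    by (simp add: pair_bracket_dRhat_lincomb generic_Rden[OF p] Tmap_fst_nth Tmap_snd_nth)
  also have "\<dots> = pbracket f g ?T"
    using sum_reindex_csucc[of "\<lambda>i. lp_form (snd ?T $ cpred i) (dY f ?T (cpred i)) (dY g ?T (cpred i))"]
    by (simp add: pbracket_eq_sum_lp_form sum.distrib)
  finally show ?thesis .
qed

section \<open>Involutivity of the traces\<close>

lemma Lmat_add_zero: "Lmat (z + w) a \<zeta> = Lmat z a \<zeta> + Lmat w 0 0"
  by (simp add: vec_eq_iff all_2 Lmat_def algebra_simps)

lemma linear_Lmat_zero: "linear (\<lambda>z. Lmat z 0 0)"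
  by (intro linearI) (simp_all add: Lmat_add_zero vec_eq_iff all_2 Lmat_def complex_eq_iff algebra_simps)

lemma differentiable_Lmat:
  fixes f :: "'a::real_normed_vector \<Rightarrow> real^3"
  assumes "f differentiable (at p)"
  shows "(\<lambda>q. Lmat (f q) a \<zeta>) differentiable (at p)"
proof -
  have "bounded_linear (\<lambda>z. Lmat z 0 0)"
    using linear_Lmat_zero by (simp add: linear_conv_bounded_linear)
  then have "(\<lambda>q. Lmat (f q) 0 0) differentiable (at p)"
    by (rule differentiable_compose[OF bounded_linear_imp_differentiable assms])
  then have "(\<lambda>q. Lmat 0 a \<zeta> + Lmat (f q) 0 0) differentiable (at p)"
    by simp
  moreover have "(\<lambda>q. Lmat 0 a \<zeta> + Lmat (f q) 0 0) = (\<lambda>q. Lmat (f q) a \<zeta>)"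
    by (rule ext) (metis Lmat_add_zero add_0)
  ultimately show ?thesis
    by simp
qed

lemma matrix_add_rdistrib: "(A + B) ** C = A ** C + B ** C"
  by (simp add: matrix_matrix_mult_def vec_eq_iff sum.distrib[symmetric] distrib_right)

lemma bounded_bilinear_matrix_mult: "bounded_bilinear ((**) :: complex^'n^'n \<Rightarrow> complex^'n^'n \<Rightarrow> complex^'n^'n)"
proof -
  have "bilinear ((**) :: complex^'n^'n \<Rightarrow> complex^'n^'n \<Rightarrow> complex^'n^'n)"
    by (auto simp: bilinear_def matrix_add_ldistrib matrix_add_rdistrib scalar_matrix_assoc matrix_scalar_ac
        intro!: linearI)
  then show ?thesis by (simp add: bilinear_conv_bounded_bilinear)
qed

lemma differentiable_matrix_mult:
  fixes f g :: "'a::real_normed_vector \<Rightarrow> complex^'n^'n"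
  assumes "f differentiable (at p)" and "g differentiable (at p)"
  shows "(\<lambda>q. f q ** g q) differentiable (at p)"
  using assms bounded_bilinear.FDERIV[OF bounded_bilinear_matrix_mult] unfolding differentiable_def by blast

lemma differentiable_trace_monodromy:
  "(\<lambda>q::'n::{finite,linorder} state. trace (monodromy \<alpha> \<beta> \<zeta> q)) differentiable (at p)"
proof -
  have "(\<lambda>q::'n state. fold (\<lambda>i A. Lmat (snd q $ i) \<beta> \<zeta> ** Lmat (fst q $ i) \<alpha> \<zeta> ** A) xs (X q))
      differentiable (at p)" if "X differentiable (at p)" for xs and X :: "'n state \<Rightarrow> complex^2^2"
    using that
  proof (induction xs arbitrary: X)
    case (Cons j xs)
    have "(\<lambda>q::'n state. fst q $ j) differentiable (at p)" and "(\<lambda>q::'n state. snd q $ j) differentiable (at p)"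
      by (simp_all add: bounded_linear_imp_differentiable bounded_linear_compose[OF bounded_linear_vec_nth]
          bounded_linear_fst bounded_linear_snd)
    with Cons.prems have "(\<lambda>q. Lmat (snd q $ j) \<beta> \<zeta> ** Lmat (fst q $ j) \<alpha> \<zeta> ** X q) differentiable (at p)"
      by (intro differentiable_matrix_mult differentiable_Lmat)
    then show ?case
      using Cons.IH by simp
  qed simp
  then have "(\<lambda>q::'n state. monodromy \<alpha> \<beta> \<zeta> q) differentiable (at p)"
    unfolding monodromy_def by simp
  moreover have "linear (trace :: complex^2^2 \<Rightarrow> complex)"
    by (intro linearI) (simp_all add: trace_def sum.distrib scaleR_sum_right)
  then have "bounded_linear (trace :: complex^2^2 \<Rightarrow> complex)"
    by (simp add: linear_conv_bounded_linear)
  ultimately show ?thesis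
    using differentiable_compose[OF bounded_linear_imp_differentiable] by blast
qed

lemma interleave_fun_upd_notin:
  "j \<notin> set xs \<Longrightarrow> interleave (a(j := A)) b xs = interleave a b xs"
  "j \<notin> set xs \<Longrightarrow> interleave a (b(j := B)) xs = interleave a b xs"
  by (induction xs) auto

lemma interleave_fun_upd_fst:
  assumes "distinct xs" and "m < length xs"
  shows "interleave (a(xs ! m := A)) b xs = (interleave a b xs)[2 * m := A]"
  using assms
proof (induction xs arbitrary: m)
  case (Cons x xs)
  show ?case
  proof (cases m)
    case 0
    with Cons.prems show ?thesis
      by (simp add: interleave_fun_upd_notin fun_upd_same del: fun_upd_apply)
  next
    case (Suc k)
    with Cons.prems have "x \<noteq> xs ! k" and k: "distinct xs" "k < length xs"
      by auto
    moreover have "2 * m = Suc (Suc (2 * k))"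
      using Suc by simp
    ultimately show ?thesis
      using Cons.IH[OF k] Suc by (simp only: nth_Cons_Suc interleave_simps list_update_code) simp
  qed
qed simp

lemma interleave_fun_upd_snd:
  assumes "distinct xs" and "m < length xs"
  shows "interleave a (b(xs ! m := A)) xs = (interleave a b xs)[2 * m + 1 := A]"
  using assms
proof (induction xs arbitrary: m)
  case (Cons x xs)
  show ?case
  proof (cases m)
    case 0
    with Cons.prems show ?thesis
      by (simp add: interleave_fun_upd_notin fun_upd_same del: fun_upd_apply)
  next
    case (Suc k)
    with Cons.prems have "x \<noteq> xs ! k" and k: "distinct xs" "k < length xs"
      by auto
    moreover have "2 * m + 1 = Suc (Suc (2 * k + 1))"
      using Suc by simp
    ultimately show ?thesis
      using Cons.IH[OF k] Suc by (simp only: nth_Cons_Suc interleave_simps list_update_code) simp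
  qed
qed simp

lemma trace_scaleR: "trace (r *\<^sub>R A) = r *\<^sub>R trace (A :: complex^'n^'n)"
  by (simp add: trace_def scaleR_sum_right)

definition matprod_hole :: "('a::semiring_1^'n^'n) list \<Rightarrow> nat \<Rightarrow> 'a^'n^'n" where
  "matprod_hole As k = matprod_rev (take k As) ** matprod_rev (drop (Suc k) As)"

lemma trace_matprod_rev_perturb:
  fixes Bs :: "(complex^'n^'n) list"
  assumes "k < length Bs"
  shows "trace (matprod_rev (Bs[k := Bs ! k + t *\<^sub>R E])) =
    trace (matprod_rev Bs) + t *\<^sub>R trace (matprod_hole Bs k ** E)"
proof -
  let ?T = "matprod_rev (take k Bs)" and ?D = "matprod_rev (drop (Suc k) Bs)"
  have split: "matprod_rev (Bs[k := C]) = ?D ** C ** ?T" for C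
    using assms by (simp add: upd_conv_take_nth_drop matprod_rev_append matprod_rev_Cons matrix_mul_assoc)
  have "matprod_rev (Bs[k := Bs ! k + t *\<^sub>R E]) = matprod_rev (Bs[k := Bs ! k]) + t *\<^sub>R (?D ** E ** ?T)"
    unfolding split by (simp add: matrix_add_ldistrib matrix_add_rdistrib scalar_matrix_assoc matrix_scalar_ac)
  moreover have "trace (?D ** E ** ?T) = trace (?T ** ?D ** E)"
    using trace_mul_sym[of "?D ** E" ?T] by (simp add: matrix_mul_assoc)
  ultimately show ?thesis
    by (simp add: trace_add trace_scaleR matprod_hole_def)
qed

lemma frechet_derivative_along_line:
  fixes f :: "'a::real_normed_vector \<Rightarrow> 'b::real_normed_vector"
  assumes "f differentiable (at p)" and line: "\<And>t. f (p + t *\<^sub>R e) = f p + t *\<^sub>R c"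
  shows "frechet_derivative f (at p) e = c"
proof -
  let ?F = "frechet_derivative f (at p)"
  have "(f has_derivative ?F) (at (p + 0 *\<^sub>R e))"
    using frechet_derivative_works[THEN iffD1, OF assms(1)] by simp
  then have "((\<lambda>t::real. f (p + t *\<^sub>R e)) has_derivative (\<lambda>t. ?F (t *\<^sub>R e))) (at 0)"
    by (intro has_derivative_compose[of "\<lambda>t. p + t *\<^sub>R e", where g = f]) (auto intro!: derivative_eq_intros)
  moreover have "((\<lambda>t::real. f (p + t *\<^sub>R e)) has_derivative (\<lambda>t. t *\<^sub>R c)) (at 0)"
    unfolding line by (auto intro!: derivative_eq_intros)
  ultimately have "(\<lambda>t. ?F (t *\<^sub>R e)) = (\<lambda>t. t *\<^sub>R c)"
    by (rule has_derivative_unique)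
  then show ?thesis
    by (metis scaleR_one)
qed

definition Lmat_basis :: "3 \<Rightarrow> complex^2^2" where
  "Lmat_basis a = Lmat (axis a 1) 0 0"

lemma Lmat_add_scaleR_axis: "Lmat (z + t *\<^sub>R axis a 1) c \<zeta> = Lmat z c \<zeta> + t *\<^sub>R Lmat_basis a"
proof -
  have "Lmat (z + t *\<^sub>R axis a 1) c \<zeta> = Lmat z c \<zeta> + Lmat (t *\<^sub>R axis a 1) 0 0"
    by (rule Lmat_add_zero)
  also have "Lmat (t *\<^sub>R axis a 1) 0 0 = t *\<^sub>R Lmat_basis a"
    unfolding Lmat_basis_def by (rule linear_scale[OF linear_Lmat_zero])
  finally show ?thesis .
qed

lemma nth_lax_factors:
  fixes p :: "'n::{finite,linorder} state"
  defines "l \<equiv> sorted_list_of_set (UNIV :: 'n set)"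
  assumes m: "m < length l"
  shows "lax_factors \<alpha> \<beta> \<zeta> p ! (2 * m) = Lmat (fst p $ (l ! m)) \<alpha> \<zeta>"
    and "lax_factors \<alpha> \<beta> \<zeta> p ! (2 * m + 1) = Lmat (snd p $ (l ! m)) \<beta> \<zeta>"
  unfolding lax_factors_def l_def[symmetric] nth_interleave[OF m] by (rule refl)+

lemma monodromy_along_axis:
  fixes p :: "'n::{finite,linorder} state"
  defines "l \<equiv> sorted_list_of_set (UNIV :: 'n set)"
  assumes m: "m < length l"
  shows "monodromy \<alpha> \<beta> \<zeta> (p + t *\<^sub>R (axis (l ! m) (axis a 1), 0)) = matprod_rev
           ((lax_factors \<alpha> \<beta> \<zeta> p)[2 * m := lax_factors \<alpha> \<beta> \<zeta> p ! (2 * m) + t *\<^sub>R Lmat_basis a])"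
    and "monodromy \<alpha> \<beta> \<zeta> (p + t *\<^sub>R (0, axis (l ! m) (axis a 1))) = matprod_rev
           ((lax_factors \<alpha> \<beta> \<zeta> p)[2 * m + 1 := lax_factors \<alpha> \<beta> \<zeta> p ! (2 * m + 1) + t *\<^sub>R Lmat_basis a])"
proof -
  have "distinct l" by (simp add: l_def)
  have fst_line: "fst (p + t *\<^sub>R (axis (l ! m) (axis a 1), 0)) $ i
      = fst p $ i + (if i = l ! m then t *\<^sub>R axis a 1 else 0)"
    and snd_line: "snd (p + t *\<^sub>R (0, axis (l ! m) (axis a 1))) $ i
      = snd p $ i + (if i = l ! m then t *\<^sub>R axis a 1 else 0)" for i
    by (simp_all add: axis_def)
  have upd: "(\<lambda>i. Lmat (z i + (if i = l ! m then t *\<^sub>R axis a 1 else 0)) c \<zeta>)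
      = (\<lambda>i. Lmat (z i) c \<zeta>)(l ! m := Lmat (z (l ! m)) c \<zeta> + t *\<^sub>R Lmat_basis a)"
    for z :: "'n \<Rightarrow> real^3" and c
    by (auto simp: fun_eq_iff Lmat_add_scaleR_axis)
  have "fst (p + t *\<^sub>R (0, axis (l ! m) (axis a 1))) = fst p"
    and "snd (p + t *\<^sub>R (axis (l ! m) (axis a 1), 0)) = snd p"
    by simp_all
  then show "monodromy \<alpha> \<beta> \<zeta> (p + t *\<^sub>R (axis (l ! m) (axis a 1), 0)) = matprod_rev
           ((lax_factors \<alpha> \<beta> \<zeta> p)[2 * m := lax_factors \<alpha> \<beta> \<zeta> p ! (2 * m) + t *\<^sub>R Lmat_basis a])"
    and "monodromy \<alpha> \<beta> \<zeta> (p + t *\<^sub>R (0, axis (l ! m) (axis a 1))) = matprod_rev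
           ((lax_factors \<alpha> \<beta> \<zeta> p)[2 * m + 1 := lax_factors \<alpha> \<beta> \<zeta> p ! (2 * m + 1) + t *\<^sub>R Lmat_basis a])"
    unfolding monodromy_eq_matprod_rev lax_factors_def l_def[symmetric] fst_line snd_line upd
      interleave_fun_upd_fst[OF \<open>distinct l\<close> m] interleave_fun_upd_snd[OF \<open>distinct l\<close> m] nth_interleave[OF m]
    by simp_all
qed

lemma partial_derivatives_trace_monodromy:
  fixes p :: "'n::{finite,linorder} state"
  defines "l \<equiv> sorted_list_of_set (UNIV :: 'n set)"
  assumes m: "m < length l"
  shows "dX (\<lambda>q. trace (monodromy \<alpha> \<beta> \<zeta> q)) p (l ! m) a
           = trace (matprod_hole (lax_factors \<alpha> \<beta> \<zeta> p) (2 * m) ** Lmat_basis a)"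
    and "dY (\<lambda>q. trace (monodromy \<alpha> \<beta> \<zeta> q)) p (l ! m) a
           = trace (matprod_hole (lax_factors \<alpha> \<beta> \<zeta> p) (2 * m + 1) ** Lmat_basis a)"
proof -
  note along_axis = monodromy_along_axis[OF m[unfolded l_def], folded l_def]
  have len: "2 * m + 1 < length (lax_factors \<alpha> \<beta> \<zeta> p)"
    using m by (simp add: lax_factors_def l_def)
  show "dX (\<lambda>q. trace (monodromy \<alpha> \<beta> \<zeta> q)) p (l ! m) a
      = trace (matprod_hole (lax_factors \<alpha> \<beta> \<zeta> p) (2 * m) ** Lmat_basis a)"
    unfolding dX_def using len
    by (intro frechet_derivative_along_line[OF differentiable_trace_monodromy])
      (unfold along_axis(1), simp add: trace_matprod_rev_perturb monodromy_eq_matprod_rev)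
  show "dY (\<lambda>q. trace (monodromy \<alpha> \<beta> \<zeta> q)) p (l ! m) a
      = trace (matprod_hole (lax_factors \<alpha> \<beta> \<zeta> p) (2 * m + 1) ** Lmat_basis a)"
    unfolding dY_def using len
    by (intro frechet_derivative_along_line[OF differentiable_trace_monodromy])
      (unfold along_axis(2), simp add: trace_matprod_rev_perturb monodromy_eq_matprod_rev)
qed

lemma Lmat_basis_eq:
  "Lmat_basis 0 = (\<chi> r c. if r = 0 \<and> c = 0 then 0 else if r = 0 \<and> c = 1 then 1 else if r = 1 \<and> c = 0 then 1 else 0)"
  "Lmat_basis 1 = (\<chi> r c. if r = 0 \<and> c = 0 then 0 else if r = 0 \<and> c = 1 then 1 else if r = 1 \<and> c = 0 then -1 else 0)"
  "Lmat_basis 2 = (\<chi> r c. if r = 0 \<and> c = 0 then \<i> else if r = 0 \<and> c = 1 then 0 else if r = 1 \<and> c = 0 then 0 else -\<i>)"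
  by (simp_all add: Lmat_basis_def Lmat_def axis_def vec_eq_iff all_2)

text \<open>The classical \<open>r\<close>-matrix structure of the bracket at one site.\<close>

lemma sklyanin_trace_identity:
  fixes X Y :: "complex^2^2"
  shows "(\<zeta> - \<eta>) * (\<Sum>a\<in>UNIV. \<Sum>b\<in>UNIV.
            Jst z a b *\<^sub>R (trace (X ** Lmat_basis a) * trace (Y ** Lmat_basis b)))
    = \<i> * (trace (X ** Lmat z c \<eta> ** Y ** Lmat z c \<zeta>) - trace (X ** Lmat z c \<zeta> ** Y ** Lmat z c \<eta>))"
proof -
  have "\<i> * \<i> = (-1::complex)"
    by simp
  show ?thesis
    by (simp add: sum_UNIV_3 sum_UNIV_2 Jst_def trace_def matrix_matrix_mult_def Lmat_basis_eq Lmat_def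
        scaleR_conv_of_real) (use \<open>\<i> * \<i> = -1\<close> in algebra)
qed

definition trace_exchange :: "(complex^'n^'n) list \<Rightarrow> (complex^'n^'n) list \<Rightarrow> nat \<Rightarrow> complex" where
  "trace_exchange Fs Gs k = trace (matprod_hole Fs k ** Gs ! k ** matprod_hole Gs k ** Fs ! k)
                           - trace (matprod_hole Fs k ** Fs ! k ** matprod_hole Gs k ** Gs ! k)"

lemma sum_trace_exchange:
  assumes "length Gs = length Fs"
  shows "(\<Sum>k<length Fs. trace_exchange Fs Gs k) = 0"
proof -
  define H where "H j = trace (matprod_rev (take j Fs) ** matprod_rev (drop j Fs)
    ** matprod_rev (take j Gs) ** matprod_rev (drop j Gs))" for j
  have "trace_exchange Fs Gs k = H (Suc k) - H k" if k: "k < length Fs" for k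
  proof -
    have kG: "k < length Gs" using k assms by simp
    have "H (Suc k) = trace (Fs ! k ** (matprod_hole Fs k ** Gs ! k ** matprod_hole Gs k))"
      using k kG
      by (simp add: H_def matprod_hole_def take_Suc_conv_app_nth matprod_rev_append matprod_rev_Cons
          matrix_mul_assoc)
    also have "\<dots> = trace (matprod_hole Fs k ** Gs ! k ** matprod_hole Gs k ** Fs ! k)"
      by (rule trace_mul_sym)
    finally have "H (Suc k) = \<dots>" .
    moreover have "H k = trace (matprod_hole Fs k ** Fs ! k ** matprod_hole Gs k ** Gs ! k)"
      using k kG
      by (simp add: H_def matprod_hole_def Cons_nth_drop_Suc[symmetric] matprod_rev_Cons matrix_mul_assoc)
    ultimately show ?thesis by (simp add: trace_exchange_def)
  qed
  then have "(\<Sum>k<length Fs. trace_exchange Fs Gs k) = (\<Sum>k<length Fs. H (Suc k) - H k)"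
    by (intro sum.cong) simp_all
  also have "\<dots> = H (length Fs) - H 0"
    by (rule sum_lessThan_telescope)
  also have "\<dots> = 0"
    using assms by (simp add: H_def)
  finally show ?thesis .
qed

lemma sum_lessThan_double: "(\<Sum>m<(n::nat). g (2 * m) + g (2 * m + 1)) = (\<Sum>k<2 * n. g k :: 'a::comm_monoid_add)"
  by (induction n) (simp_all add: add.assoc)

lemma sum_Jst_symmetric_zero: "(\<Sum>a\<in>UNIV. \<Sum>b\<in>UNIV. Jst z a b *\<^sub>R (F a * F b)) = (0::complex)"
  by (simp add: sum_UNIV_3 Jst_def algebra_simps)

lemma site_bracket_trace_monodromy:
  fixes p :: "'n::{finite,linorder} state" and \<alpha> \<beta> :: real
  defines "l \<equiv> sorted_list_of_set (UNIV :: 'n set)"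
    and "f \<equiv> \<lambda>\<zeta> q. trace (monodromy \<alpha> \<beta> \<zeta> q)"
  assumes m: "m < length l"
  shows "(\<zeta> - \<eta>) * (\<Sum>a\<in>UNIV. \<Sum>b\<in>UNIV.
            Jst (fst p $ (l ! m)) a b *\<^sub>R (dX (f \<zeta>) p (l ! m) a * dX (f \<eta>) p (l ! m) b))
      = \<i> * trace_exchange (lax_factors \<alpha> \<beta> \<zeta> p) (lax_factors \<alpha> \<beta> \<eta> p) (2 * m)"
    and "(\<zeta> - \<eta>) * (\<Sum>a\<in>UNIV. \<Sum>b\<in>UNIV.
            Jst (snd p $ (l ! m)) a b *\<^sub>R (dY (f \<zeta>) p (l ! m) a * dY (f \<eta>) p (l ! m) b))
      = \<i> * trace_exchange (lax_factors \<alpha> \<beta> \<zeta> p) (lax_factors \<alpha> \<beta> \<eta> p) (2 * m + 1)"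
  using nth_lax_factors[OF m[unfolded l_def], folded l_def]
    partial_derivatives_trace_monodromy[OF m[unfolded l_def], folded l_def]
  by (simp_all add: f_def trace_exchange_def sklyanin_trace_identity[where c = \<alpha> and z = "fst p $ (l ! m)"]
      sklyanin_trace_identity[where c = \<beta> and z = "snd p $ (l ! m)"] matrix_mul_assoc)

lemma pbracket_trace_monodromy:
  fixes p :: "'n::{finite,linorder} state"
  shows "pbracket (\<lambda>p. trace (monodromy \<alpha> \<beta> \<zeta> p)) (\<lambda>p. trace (monodromy \<alpha> \<beta> \<eta> p)) p = 0"
proof (cases "\<zeta> = \<eta>")
  case True
  then show ?thesis
    by (simp add: pbracket_def sum.distrib sum_Jst_symmetric_zero)
next
  case False
  define l where "l = sorted_list_of_set (UNIV :: 'n set)"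
  define f where "f = (\<lambda>\<zeta> (q :: 'n state). trace (monodromy \<alpha> \<beta> \<zeta> q))"
  define te where "te = trace_exchange (lax_factors \<alpha> \<beta> \<zeta> p) (lax_factors \<alpha> \<beta> \<eta> p)"
  define h where "h i = (\<zeta> - \<eta>) * (\<Sum>a\<in>UNIV. \<Sum>b\<in>UNIV. Jst (fst p $ i) a b *\<^sub>R (dX (f \<zeta>) p i a * dX (f \<eta>) p i b))
    + (\<zeta> - \<eta>) * (\<Sum>a\<in>UNIV. \<Sum>b\<in>UNIV. Jst (snd p $ i) a b *\<^sub>R (dY (f \<zeta>) p i a * dY (f \<eta>) p i b))" for i
  have "distinct l" and "set l = UNIV"
    by (simp_all add: l_def)
  have "(\<zeta> - \<eta>) * pbracket (f \<zeta>) (f \<eta>) p = (\<Sum>m<length l. h (l ! m))"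
    using sum.reindex_bij_betw[OF bij_betw_nth[OF \<open>distinct l\<close> refl refl], of h] \<open>set l = UNIV\<close>
    by (simp add: pbracket_def h_def sum_distrib_left sum.distrib distrib_left)
  also have "\<dots> = (\<Sum>m<length l. \<i> * (te (2 * m) + te (2 * m + 1)))"
    unfolding h_def te_def f_def l_def
    by (intro sum.cong refl) (simp add: site_bracket_trace_monodromy distrib_left)
  also have "\<dots> = \<i> * (\<Sum>k<length (lax_factors \<alpha> \<beta> \<zeta> p). te k)"
    by (simp only: sum_distrib_left[symmetric] sum_lessThan_double lax_factors_def length_interleave l_def)
  also have "\<dots> = 0"
    using sum_trace_exchange[of "lax_factors \<alpha> \<beta> \<eta> p" "lax_factors \<alpha> \<beta> \<zeta> p"]
    by (simp add: te_def lax_factors_def)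
  finally show ?thesis
    using False by (simp add: f_def)
qed

theorem proposition4p2:
  fixes \<alpha> \<beta> :: real
  defines "T \<equiv> (Tmap \<alpha> \<beta> :: 'n::{finite,linorder} state \<Rightarrow> 'n state)"
  shows
    \<comment> \<open>Poisson map\<close>
    "(\<forall>p \<in> generic \<alpha> \<beta>. \<forall>f g :: 'n state \<Rightarrow> real.
        f differentiable (at (T p)) \<and> g differentiable (at (T p)) \<longrightarrow>
        pbracket (f \<circ> T) (g \<circ> T) p = pbracket f g (T p))
   \<and> \<comment> \<open>spectrum of the monodromy matrix\<close>
     (\<forall>p \<in> generic \<alpha> \<beta>. \<forall>\<zeta>.
        eigenvalues (monodromy \<alpha> \<beta> \<zeta> (T p)) = eigenvalues (monodromy \<alpha> \<beta> \<zeta> p))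
   \<and> \<comment> \<open>Casimirs: the pull-back of each Casimir is again one of the 2n Casimirs\<close>
     (\<forall>c \<in> casimir_functions. \<exists>c' \<in> casimir_functions.
        \<forall>p \<in> generic \<alpha> \<beta>. c (T p) = c' p)
   \<and> \<comment> \<open>linear integrals\<close>
     (\<forall>k p. p \<in> generic \<alpha> \<beta> \<longrightarrow> lin_integral k (T p) = lin_integral k p)
   \<and> \<comment> \<open>involutivity of the trace\<close>
     (\<forall>\<zeta> \<eta> (p :: 'n state).
        pbracket (\<lambda>p. trace (monodromy \<alpha> \<beta> \<zeta> p)) (\<lambda>p. trace (monodromy \<alpha> \<beta> \<eta> p)) p = 0)"
  unfolding T_def
  by (auto simp: pbracket_comp_Tmap eigenvalues_monodromy_Tmap casimir_functions_Tmap lin_integral_Tmap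
      pbracket_trace_monodromy)

end
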